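(* Let $H(s):\mathbb{R}\mapsto\mathbb{C}^{N\times N}$ be differentiable on the domain $[0,t]$ and let $\langle\|\dot H\|\rangle:=\frac{1}{t}\int_0^t\left\|\frac{\mathrm{d}H(s)}{\mathrm{d}s}\right\|\mathrm{d}s$. Let $K\ge0$ be an integer and $\epsilon_2>0$. If $M$ is chosen such that 1. $M\ge\frac{t^2}{\epsilon_2}4e^{\max_s\|H(s)\|t}\left(\langle\|\dot H\|\rangle+\max_s\|H(s)\|^2\right)$, and 2. $M\ge K^2$, then $\left\|\sum_{k=0}^K(-i)^kD_k-\sum_{k=0}^K\left(-i\frac{t}{M}\right)^kB_k\right\|\le\epsilon_2$.
   Context: $\|\cdot\|$ is the spectral norm. $D_k=\frac{1}{k!}\int_0^t\cdots\int_0^t\mathcal{T}[H(t_1)\cdots H(t_k)]\mathrm{d}^kt$, where $\mathcal{T}$ reorders an operator product so that factors at later times stand to the left. With $\Delta=t/M$, $B_k=\sum_{0\le m_1<\cdots<m_k<M}H(m_k\Delta)\cdots H(m_1\Delta)$ (and $B_0=D_0$ the identity). *)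

theory Defs
  imports "HOL-Analysis.Analysis"
begin

definition snorm :: "complex^'n^'n \<Rightarrow> real" where
  "snorm A = onorm (\<lambda>x::complex^'n. A *v x)"

definition cscale :: "complex \<Rightarrow> complex^'n^'n \<Rightarrow> complex^'n^'n" where
  "cscale c A = (\<chi> i j. c * A $ i $ j)"

definition mprod :: "(complex^'n^'n) list \<Rightarrow> complex^'n^'n" where
  "mprod As = foldr (**) As (mat 1)"

text \<open>Time-ordered product T[H(x 0) ... H(x (k-1))]: factors at later times to the left.\<close>
definition time_ordered :: "(real \<Rightarrow> complex^'n^'n) \<Rightarrow> nat \<Rightarrow> (nat \<Rightarrow> real) \<Rightarrow> complex^'n^'n" where
  "time_ordered H k x = mprod (map H (rev (sort (map x [0..<k]))))"

definition Dk :: "(real \<Rightarrow> complex^'n^'n) \<Rightarrow> real \<Rightarrow> nat \<Rightarrow> complex^'n^'n" where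
  "Dk H t k = (1 / fact k) *\<^sub>R
     integral\<^sup>L (PiM {..<k} (\<lambda>_. restrict_space lborel {0..t})) (time_ordered H k)"

definition Bk :: "(real \<Rightarrow> complex^'n^'n) \<Rightarrow> real \<Rightarrow> nat \<Rightarrow> nat \<Rightarrow> complex^'n^'n" where
  "Bk H t M k = (\<Sum>S\<in>{S. S \<subseteq> {..<M} \<and> card S = k}.
      mprod (map (\<lambda>m. H (real m * (t / real M))) (rev (sorted_list_of_set S))))"

end

(*
  Replace each time coordinate in [0, t]^k by the left end point of its cell in the uniform grid
  of M cells. The time-ordered integrand of k! D_k then becomes a step function whose integral is
  (t/M)^k times the sum of the time-ordered grid products over all index maps {..<k} -> {..<M}.
  The injective maps contribute exactly k! B_k; the at most k(k-1)/2 M^(k-1) others are bounded by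
  h^k each, where h = max ||H||. Telescoping the ordered product, the integrand and the step
  function differ by at most h^(k-1) times the variations of H over the k cells involved, which
  integrate to k (t/M) (h t)^(k-1) times the integral of ||H'||. So the k-th error is at most
  (t/M) k (h t)^(k-1) / k! * (integral of ||H'|| + (k-1) h / 2), and summing against the
  exponential series gives (t/M) e^(h t) (integral of ||H'|| + t h^2 / 2), which the choice of M
  makes at most epsilon2.
*)

theory Submission
  imports Defs "HOL-Combinatorics.Multiset_Permutations"
begin

section \<open>Spectral norm\<close>

lemma bounded_bilinear_matrix_vector_mult:
  "bounded_bilinear (\<lambda>(A::complex^'n^'n) x. A *v x)"
  unfolding bilinear_conv_bounded_bilinear[symmetric] bilinear_def
  by (simp add: linear_iff vec_eq_iff matrix_vector_mult_def scaleR_sum_right sum.distrib algebra_simps)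

lemma bounded_bilinear_matrix_mult:
  "bounded_bilinear (\<lambda>(A::complex^'n^'n) B. A ** B)"
  unfolding bilinear_conv_bounded_bilinear[symmetric] bilinear_def
  by (simp add: linear_iff vec_eq_iff matrix_matrix_mult_def scaleR_sum_right sum.distrib algebra_simps)

lemma snorm_nonneg: "0 \<le> snorm A"
  unfolding snorm_def by (rule onorm_pos_le) simp

lemma norm_matrix_vector_mult_le_snorm: "norm (A *v x) \<le> snorm A * norm x"
  unfolding snorm_def by (rule onorm) simp

lemma snorm_bound: "0 \<le> b \<Longrightarrow> (\<And>x. norm (A *v x) \<le> b * norm x) \<Longrightarrow> snorm A \<le> b"
  unfolding snorm_def by (rule onorm_bound)

lemma snorm_zero [simp]: "snorm 0 = 0"
  by (intro antisym snorm_bound snorm_nonneg) simp_all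

lemma snorm_mat_1_le: "snorm (mat 1) \<le> 1"
  by (rule snorm_bound) simp_all

lemma snorm_add_le: "snorm (A + B) \<le> snorm A + snorm B"
  unfolding snorm_def matrix_vector_mult_add_rdistrib by (rule onorm_triangle) simp_all

lemma snorm_sum_le: "snorm (sum f S) \<le> (\<Sum>i\<in>S. snorm (f i))"
  by (induction S rule: infinite_finite_induct) (auto intro: order_trans[OF snorm_add_le])

lemma snorm_matrix_mult_le: "snorm (A ** B) \<le> snorm A * snorm B"
  using onorm_compose[of "\<lambda>x. A *v x" "\<lambda>x. B *v x"]
  by (simp add: snorm_def comp_def matrix_vector_mul_assoc)

lemma snorm_scaleR: "snorm (r *\<^sub>R A) = \<bar>r\<bar> * snorm A"
proof -
  have "(\<lambda>x. (r *\<^sub>R A) *v x) = (\<lambda>x. r *\<^sub>R (A *v x))"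
    by (rule ext) (simp add: matrix_vector_mult_def vec_eq_iff scaleR_sum_right)
  then show ?thesis
    unfolding snorm_def by (simp add: onorm_scaleR)
qed

lemma snorm_cscale_le: "snorm (cscale c A) \<le> cmod c * snorm A"
proof (rule snorm_bound)
  fix x
  have "norm (cscale c A *v x) = cmod c * norm (A *v x)"
    by (simp add: cscale_def matrix_vector_mult_def norm_vec_def L2_set_def norm_mult power_mult_distrib
        sum_distrib_left[symmetric] real_sqrt_mult mult.assoc)
  then show "norm (cscale c A *v x) \<le> cmod c * snorm A * norm x"
    by (simp add: mult.assoc mult_left_mono norm_matrix_vector_mult_le_snorm)
qed (simp add: snorm_nonneg)

lemma cscale_diff: "cscale c A - cscale c B = cscale c (A - B)"
  by (simp add: cscale_def vec_eq_iff right_diff_distrib)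

lemma cscale_mult_of_real: "cscale (c * complex_of_real r) A = cscale c (r *\<^sub>R A)"
proof -
  have "cscale (c * complex_of_real r) A $ i $ j = cscale c (r *\<^sub>R A) $ i $ j" for i j
    by (simp add: cscale_def) (simp add: scaleR_conv_of_real)
  then show ?thesis
    by (simp add: vec_eq_iff)
qed

lemma snorm_le_norm_bound: "\<exists>K. \<forall>A::complex^'n^'n. snorm A \<le> K * norm A"
proof -
  obtain K where K: "0 \<le> K" "\<And>(A::complex^'n^'n) x. norm (A *v x) \<le> norm A * norm x * K"
    using bounded_bilinear.nonneg_bounded[OF bounded_bilinear_matrix_vector_mult] by auto
  then have "snorm A \<le> K * norm A" for A :: "complex^'n^'n"
    by (intro snorm_bound) (auto simp: mult_ac)
  then show ?thesis by blast
qed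

lemma bdd_above_snorm_image:
  fixes H :: "real \<Rightarrow> complex^'n^'n"
  assumes "continuous_on S H" and "compact S"
  shows "bdd_above ((\<lambda>s. snorm (H s)) ` S)"
proof -
  obtain K where K: "\<And>A::complex^'n^'n. snorm A \<le> K * norm A"
    using snorm_le_norm_bound by blast
  obtain B where B: "\<And>s. s \<in> S \<Longrightarrow> norm (H s) \<le> B"
    using compact_imp_bounded[OF compact_continuous_image[OF assms]] by (auto simp: bounded_iff)
  have "snorm (H s) \<le> \<bar>K\<bar> * B" if "s \<in> S" for s
    using K[of "H s"] B[OF that] abs_ge_self[of K]
    by (smt (verit) mult_left_mono mult_right_mono norm_ge_zero)
  then show ?thesis
    by (intro bdd_aboveI2)
qed

lemma norm_le_snorm: "norm A \<le> real CARD('n)^2 * snorm (A::complex^'n^'n)"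
proof -
  have entry: "norm (A $ i $ j) \<le> snorm A" for i j
  proof -
    have "norm (A $ i $ j) = norm ((A *v axis j 1) $ i)"
      by (simp add: matrix_vector_mult_def axis_def if_distrib cong: if_cong)
    also have "\<dots> \<le> norm (A *v axis j 1)"
      by (rule Finite_Cartesian_Product.norm_nth_le)
    also have "\<dots> \<le> snorm A * norm (axis j (1::complex))"
      by (rule norm_matrix_vector_mult_le_snorm)
    finally show ?thesis
      by (simp add: inner_axis' norm_eq_1)
  qed
  have norm_le_sum: "norm x \<le> (\<Sum>i\<in>UNIV. norm (x $ i))" for x :: "'a::real_normed_vector^'n"
    unfolding norm_vec_def by (rule L2_set_le_sum) simp
  have "norm A \<le> (\<Sum>i\<in>UNIV. \<Sum>j\<in>UNIV. norm (A $ i $ j))"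
    by (rule order_trans[OF norm_le_sum sum_mono[OF norm_le_sum]])
  also have "\<dots> \<le> (\<Sum>i\<in>(UNIV::'n set). \<Sum>j\<in>(UNIV::'n set). snorm A)"
    by (intro sum_mono entry)
  finally show ?thesis
    by (simp add: power2_eq_square)
qed

lemma snorm_integral_le:
  fixes f :: "'a \<Rightarrow> complex^'n^'n"
  assumes f: "integrable M f" and g: "integrable M g"
    and le: "\<And>x. x \<in> space M \<Longrightarrow> snorm (f x) \<le> g x"
  shows "snorm (integral\<^sup>L M f) \<le> integral\<^sup>L M g"
proof (rule snorm_bound)
  show "0 \<le> integral\<^sup>L M g"
    by (intro integral_nonneg_AE AE_I2) (metis le snorm_nonneg order_trans)
  fix v :: "complex^'n"
  have lin: "bounded_linear (\<lambda>A::complex^'n^'n. A *v v)"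
    by (rule bounded_bilinear.bounded_linear_left[OF bounded_bilinear_matrix_vector_mult])
  have "norm (integral\<^sup>L M f *v v) = norm (integral\<^sup>L M (\<lambda>x. f x *v v))"
    using integral_bounded_linear[OF lin f] by simp
  also have "\<dots> \<le> integral\<^sup>L M (\<lambda>x. norm (f x *v v))"
    by (rule integral_norm_bound)
  also have "\<dots> \<le> integral\<^sup>L M (\<lambda>x. g x * norm v)"
  proof (intro integral_mono integrable_norm integrable_bounded_linear[OF lin f] integrable_mult_left g)
    fix x assume "x \<in> space M"
    then show "norm (f x *v v) \<le> g x * norm v"
      using le[of x] norm_matrix_vector_mult_le_snorm[of "f x" v] mult_right_mono[of _ _ "norm v"]
      by fastforce
  qed
  finally show "norm (integral\<^sup>L M f *v v) \<le> integral\<^sup>L M g * norm v"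
    by simp
qed

lemma snorm_diff_le_integral_derivative:
  fixes H :: "real \<Rightarrow> complex^'n^'n"
  assumes "a \<le> b" and "{a..b} \<subseteq> S" and "H differentiable_on S"
    and int: "(\<lambda>s. snorm (vector_derivative H (at s within S))) integrable_on {a..b}"
  shows "snorm (H b - H a) \<le> integral {a..b} (\<lambda>s. snorm (vector_derivative H (at s within S)))"
proof (rule snorm_bound)
  let ?H' = "\<lambda>s. vector_derivative H (at s within S)"
  show "0 \<le> integral {a..b} (\<lambda>s. snorm (?H' s))"
    by (rule integral_nonneg[OF int]) (simp add: snorm_nonneg)
  fix v :: "complex^'n"
  have "(H has_vector_derivative ?H' s) (at s within {a..b})" if "s \<in> {a..b}" for s
    using assms that
    by (metis differentiable_on_def has_vector_derivative_within_subset subsetD vector_derivative_works)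
  then have "(?H' has_integral (H b - H a)) {a..b}"
    by (rule fundamental_theorem_of_calculus[OF \<open>a \<le> b\<close>])
  from has_integral_linear[OF this
      bounded_bilinear.bounded_linear_left[OF bounded_bilinear_matrix_vector_mult]]
  have hv: "((\<lambda>s. ?H' s *v v) has_integral ((H b - H a) *v v)) {a..b}"
    by (simp add: o_def)
  have "norm (integral {a..b} (\<lambda>s. ?H' s *v v)) \<le> integral {a..b} (\<lambda>s. snorm (?H' s) * norm v)"
    using hv integrable_on_mult_left[OF int] norm_matrix_vector_mult_le_snorm
    by (intro integral_norm_bound_integral) blast+
  then show "norm ((H b - H a) *v v) \<le> integral {a..b} (\<lambda>s. snorm (?H' s)) * norm v"
    using hv by (simp add: integral_unique)
qed

section \<open>Ordered products\<close>

lemma mprod_Nil [simp]: "mprod [] = mat 1"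
  by (simp add: mprod_def)

lemma mprod_Cons [simp]: "mprod (A # As) = A ** mprod As"
  by (simp add: mprod_def)

lemma matrix_mult_diff_telescope:
  fixes A B P Q :: "'a::comm_ring_1^'n^'n"
  shows "A ** P - B ** Q = (A - B) ** P + B ** (P - Q)"
  by (simp add: matrix_matrix_mult_def vec_eq_iff sum_subtractf sum.distrib algebra_simps)

lemma snorm_mprod_le:
  assumes "\<And>A. A \<in> set As \<Longrightarrow> snorm A \<le> h" and "0 \<le> h"
  shows "snorm (mprod As) \<le> h ^ length As"
  using assms
proof (induction As)
  case Nil
  then show ?case by (simp add: snorm_mat_1_le)
next
  case (Cons A As)
  have "snorm (mprod (A # As)) \<le> snorm A * snorm (mprod As)"
    by (simp add: snorm_matrix_mult_le)
  also have "\<dots> \<le> h * h ^ length As"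
    using Cons by (intro mult_mono snorm_nonneg) auto
  finally show ?case by simp
qed

lemma snorm_mprod_diff_le:
  fixes f g :: "'a \<Rightarrow> complex^'n^'n"
  assumes "\<And>y. y \<in> set ys \<Longrightarrow> snorm (f y) \<le> h" and "\<And>y. y \<in> set ys \<Longrightarrow> snorm (g y) \<le> h"
    and "0 \<le> h"
  shows "snorm (mprod (map f ys) - mprod (map g ys))
           \<le> h ^ (length ys - 1) * (\<Sum>y\<leftarrow>ys. snorm (f y - g y))"
  using assms
proof (induction ys)
  case Nil
  then show ?case by simp
next
  case (Cons y ys)
  let ?P = "mprod (map f ys)" and ?Q = "mprod (map g ys)"
  have "snorm (mprod (map f (y # ys)) - mprod (map g (y # ys)))
          \<le> snorm (f y - g y) * snorm ?P + snorm (g y) * snorm (?P - ?Q)"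
    unfolding list.map mprod_Cons matrix_mult_diff_telescope
    by (rule order_trans[OF snorm_add_le add_mono[OF snorm_matrix_mult_le snorm_matrix_mult_le]])
  also have "\<dots> \<le> snorm (f y - g y) * h ^ length ys
                    + h * (h ^ (length ys - 1) * (\<Sum>y\<leftarrow>ys. snorm (f y - g y)))"
    using Cons snorm_mprod_le[of "map f ys" h] by (intro add_mono mult_mono snorm_nonneg) auto
  also have "\<dots> = h ^ length ys * (\<Sum>y\<leftarrow>y # ys. snorm (f y - g y))"
    by (cases ys) (simp_all add: algebra_simps)
  finally show ?case by simp
qed

lemma tendsto_mprod:
  assumes "\<And>y. y \<in> set ys \<Longrightarrow> ((\<lambda>n. f n y) \<longlongrightarrow> g y) F"
  shows "((\<lambda>n. mprod (map (f n) ys)) \<longlongrightarrow> mprod (map g ys)) F"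
  using assms
proof (induction ys)
  case (Cons y ys)
  have "((\<lambda>n. f n y ** mprod (map (f n) ys)) \<longlongrightarrow> g y ** mprod (map g ys)) F"
    using Cons by (intro bounded_bilinear.tendsto[OF bounded_bilinear_matrix_mult]) auto
  then show ?case by simp
qed simp

lemma sort_map_mono:
  assumes "mono f"
  shows "sort (map f xs) = map f (sort xs)"
proof (rule properties_for_sort)
  show "sorted (map f (sort xs))"
    using assms by (intro sorted_map_mono) (auto simp: mono_on_def monoD)
qed simp

lemma time_ordered_comp_mono:
  fixes f :: "'a::linorder \<Rightarrow> real"
  assumes "mono f"
  shows "time_ordered H k (f \<circ> x) = mprod (map (H \<circ> f) (rev (sort (map x [0..<k]))))"
  unfolding time_ordered_def map_map[symmetric] sort_map_mono[OF assms] rev_map ..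

lemma time_ordered_cong:
  assumes "\<And>j. j < k \<Longrightarrow> x j = y j"
  shows "time_ordered H k x = time_ordered H k y"
proof -
  have "map x [0..<k] = map y [0..<k]"
    using assms by simp
  then show ?thesis
    unfolding time_ordered_def by (simp only:)
qed

lemma snorm_time_ordered_le:
  assumes "\<And>j. j < k \<Longrightarrow> snorm (H (x j)) \<le> h" and "0 \<le> h"
  shows "snorm (time_ordered H k x) \<le> h ^ k"
  unfolding time_ordered_def using assms by (intro order_trans[OF snorm_mprod_le]) auto

lemma sum_list_map_rev_sort:
  fixes f :: "'a::linorder \<Rightarrow> 'b::comm_monoid_add"
  shows "sum_list (map f (rev (sort xs))) = sum_list (map f xs)"
proof -
  have "mset (map f (rev (sort xs))) = mset (map f xs)"
    by simp
  then show ?thesis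
    by (metis sum_mset_sum_list)
qed

lemma snorm_time_ordered_diff_le:
  assumes "\<And>j. j < k \<Longrightarrow> snorm (H (x j)) \<le> h" and "\<And>j. j < k \<Longrightarrow> snorm (G (x j)) \<le> h"
    and "0 \<le> h"
  shows "snorm (time_ordered H k x - time_ordered G k x)
           \<le> h ^ (k - 1) * (\<Sum>j<k. snorm (H (x j) - G (x j)))"
proof -
  let ?ys = "rev (sort (map x [0..<k]))"
  have "snorm (time_ordered H k x - time_ordered G k x)
          \<le> h ^ (length ?ys - 1) * (\<Sum>y\<leftarrow>?ys. snorm (H y - G y))"
    unfolding time_ordered_def using assms by (intro snorm_mprod_diff_le) auto
  also have "(\<Sum>y\<leftarrow>?ys. snorm (H y - G y)) = (\<Sum>j<k. snorm (H (x j) - G (x j)))"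
    by (simp add: sum_list_map_rev_sort sum_set_upt_conv_sum_list_nat[symmetric] atLeast0LessThan)
  finally show ?thesis by simp
qed

lemma tendsto_time_ordered:
  assumes "\<And>j. j < k \<Longrightarrow> ((\<lambda>n. G n (x j)) \<longlongrightarrow> H (x j)) F"
  shows "((\<lambda>n. time_ordered (G n) k x) \<longlongrightarrow> time_ordered H k x) F"
  unfolding time_ordered_def using assms by (intro tendsto_mprod) auto

lemma Bk_0: "Bk H t M 0 = mat 1"
proof -
  have "{S. S \<subseteq> {..<M} \<and> card S = 0} = {{}}"
    by (auto dest: finite_subset[OF _ finite_lessThan])
  then show ?thesis
    by (simp add: Bk_def mprod_def)
qed

section \<open>Injective index maps\<close>

definition inj_maps :: "nat \<Rightarrow> nat \<Rightarrow> (nat \<Rightarrow> nat) set" where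
  "inj_maps k M = {m \<in> {..<k} \<rightarrow>\<^sub>E {..<M}. inj_on m {..<k}}"

lemma nth_in_inj_maps_onto_set:
  assumes "distinct xs" "length xs = k" "set xs \<subseteq> {..<M}"
  shows "(\<lambda>i. if i < k then xs ! i else undefined) \<in> {m \<in> inj_maps k M. m ` {..<k} = set xs}"
proof -
  let ?m = "\<lambda>i. if i < k then xs ! i else undefined"
  have image: "?m ` {..<k} = set xs"
    unfolding set_conv_nth using assms(2) by auto
  moreover have "inj_on ?m {..<k}"
    using assms(1,2) by (simp add: inj_on_def nth_eq_iff_index_eq)
  moreover have "?m \<in> {..<k} \<rightarrow>\<^sub>E {..<M}"
    by (rule PiE_I) (use image assms(3) in auto)
  ultimately show ?thesis
    by (simp add: inj_maps_def)
qed

lemma bij_betw_inj_maps_onto_permutations_of_set: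
  assumes S: "S \<subseteq> {..<M}" "card S = k"
  shows "bij_betw (\<lambda>m. map m [0..<k]) {m \<in> inj_maps k M. m ` {..<k} = S} (permutations_of_set S)"
    (is "bij_betw _ ?A _")
proof (rule bij_betw_byWitness[where f' = "\<lambda>xs i. if i < k then xs ! i else undefined"])
  let ?g = "\<lambda>xs i. if i < k then xs ! i else undefined"
  show "\<forall>m\<in>?A. ?g (map m [0..<k]) = m"
  proof
    fix m assume "m \<in> ?A"
    then have "m \<in> extensional {..<k}"
      by (simp add: inj_maps_def PiE_def)
    then show "?g (map m [0..<k]) = m"
      by (intro ext) (simp add: extensional_def)
  qed
  show "(\<lambda>m. map m [0..<k]) ` ?A \<subseteq> permutations_of_set S"
  proof (rule image_subsetI)
    fix m assume "m \<in> ?A"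
    then show "map m [0..<k] \<in> permutations_of_set S"
      by (simp add: inj_maps_def permutations_of_set_def distinct_map lessThan_atLeast0)
  qed
  show "\<forall>xs\<in>permutations_of_set S. map (?g xs) [0..<k] = xs"
  proof
    fix xs assume "xs \<in> permutations_of_set S"
    then have "length xs = k"
      using length_finite_permutations_of_set S(2) by blast
    then show "map (?g xs) [0..<k] = xs"
      by (intro nth_equalityI) simp_all
  qed
  show "?g ` permutations_of_set S \<subseteq> ?A"
  proof (rule image_subsetI)
    fix xs assume "xs \<in> permutations_of_set S"
    then have "distinct xs" "length xs = k" "set xs = S"
      using length_finite_permutations_of_set S(2) by (auto simp: permutations_of_set_def)
    then show "?g xs \<in> ?A"
      using nth_in_inj_maps_onto_set[of xs k M] S(1) by simp
  qed
qed

lemma card_inj_maps_onto: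
  assumes "S \<subseteq> {..<M}" "card S = k"
  shows "card {m \<in> inj_maps k M. m ` {..<k} = S} = fact k"
proof -
  have "finite S"
    using assms finite_subset by blast
  then show ?thesis
    using bij_betw_same_card[OF bij_betw_inj_maps_onto_permutations_of_set[OF assms]] assms(2) by simp
qed

lemma finite_inj_maps: "finite (inj_maps k M)"
  unfolding inj_maps_def by (rule finite_subset[of _ "{..<k} \<rightarrow>\<^sub>E {..<M}"]) (auto simp: finite_PiE)

lemma sum_inj_maps_image:
  fixes G :: "nat set \<Rightarrow> 'a::real_vector"
  shows "(\<Sum>m\<in>inj_maps k M. G (m ` {..<k}))
           = fact k *\<^sub>R (\<Sum>S\<in>{S. S \<subseteq> {..<M} \<and> card S = k}. G S)"
proof -
  let ?Sk = "{S. S \<subseteq> {..<M} \<and> card S = k}"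
  have "finite ?Sk"
    by (rule finite_subset[of _ "Pow {..<M}"]) auto
  moreover have "(\<lambda>m. m ` {..<k}) ` inj_maps k M \<subseteq> ?Sk"
    by (auto simp: inj_maps_def card_image PiE_iff)
  ultimately have "(\<Sum>m\<in>inj_maps k M. G (m ` {..<k}))
               = (\<Sum>S\<in>?Sk. \<Sum>m\<in>{m \<in> inj_maps k M. m ` {..<k} = S}. G (m ` {..<k}))"
    by (intro sum.group[symmetric] finite_inj_maps)
  also have "\<dots> = (\<Sum>S\<in>?Sk. \<Sum>m\<in>{m \<in> inj_maps k M. m ` {..<k} = S}. G S)"
    by (intro sum.cong) auto
  also have "\<dots> = (\<Sum>S\<in>?Sk. fact k *\<^sub>R G S)"
    by (intro sum.cong refl) (simp add: card_inj_maps_onto sum_constant_scaleR)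
  finally show ?thesis
    by (simp add: scaleR_sum_right)
qed

lemma sum_inj_maps_time_ordered:
  assumes "0 \<le> t"
  shows "(\<Sum>m\<in>inj_maps k M. time_ordered H k (\<lambda>j. real (m j) * (t / real M)))
           = fact k *\<^sub>R Bk H t M k"
proof -
  let ?f = "\<lambda>i::nat. real i * (t / real M)"
  have "time_ordered H k (\<lambda>j. ?f (m j))
          = mprod (map (\<lambda>i. H (?f i)) (rev (sorted_list_of_set (m ` {..<k}))))"
    if "m \<in> inj_maps k M" for m
  proof -
    have "distinct (map m [0..<k])"
      using that by (simp add: inj_maps_def distinct_map atLeast0LessThan)
    then have "sort (map m [0..<k]) = sorted_list_of_set (set (map m [0..<k]))"
      by (simp only: sorted_list_of_set_sort_remdups distinct_remdups_id)
    also have "set (map m [0..<k]) = m ` {..<k}"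
      by (auto simp: atLeast0LessThan)
    finally have "sort (map m [0..<k]) = sorted_list_of_set (m ` {..<k})" .
    moreover have "mono ?f"
      using assms by (intro monoI mult_right_mono) auto
    ultimately show ?thesis
      using time_ordered_comp_mono[of ?f H k m] by (simp add: comp_def)
  qed
  then show ?thesis
    unfolding Bk_def by (simp add: sum_inj_maps_image[symmetric] cong: sum.cong)
qed

lemma card_maps_collision_le:
  assumes "i < k" "j < k" "i \<noteq> j"
  shows "card {m \<in> {..<k} \<rightarrow>\<^sub>E {..<M::nat}. m i = m j} \<le> M ^ (k - 1)"
proof -
  let ?D = "{..<k} - {j}"
  have "{m \<in> {..<k} \<rightarrow>\<^sub>E {..<M}. m i = m j} \<subseteq> (\<lambda>m. m(j := m i)) ` (?D \<rightarrow>\<^sub>E {..<M})"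
  proof clarify
    fix m assume m: "m \<in> {..<k} \<rightarrow>\<^sub>E {..<M}" "m i = m j"
    then have "m = (restrict m ?D)(j := restrict m ?D i)"
      using assms by (auto simp: fun_eq_iff PiE_def extensional_def)
    moreover have "restrict m ?D \<in> ?D \<rightarrow>\<^sub>E {..<M}"
      using m by auto
    ultimately show "m \<in> (\<lambda>m. m(j := m i)) ` (?D \<rightarrow>\<^sub>E {..<M})"
      by blast
  qed
  then have "card {m \<in> {..<k} \<rightarrow>\<^sub>E {..<M}. m i = m j} \<le> card (?D \<rightarrow>\<^sub>E {..<M})"
    by (intro order_trans[OF card_mono card_image_le] finite_imageI finite_PiE) auto
  also have "\<dots> = M ^ (k - 1)"
    using assms by (simp add: card_PiE)
  finally show ?thesis .
qed

lemma card_non_inj_maps_le: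
  "real (card (({..<k} \<rightarrow>\<^sub>E {..<M}) - inj_maps k M)) \<le> real k * (real k - 1) / 2 * real M ^ (k - 1)"
proof -
  let ?C = "\<lambda>i j. {m \<in> {..<k} \<rightarrow>\<^sub>E {..<M}. m i = m j}"
  have fin: "finite ({..<k} \<rightarrow>\<^sub>E {..<M})"
    by (simp add: finite_PiE)
  have "({..<k} \<rightarrow>\<^sub>E {..<M}) - inj_maps k M \<subseteq> (\<Union>j<k. \<Union>i<j. ?C i j)"
  proof
    fix m assume m: "m \<in> ({..<k} \<rightarrow>\<^sub>E {..<M}) - inj_maps k M"
    then obtain a b where ab: "a < b" "b < k" "m a = m b"
      by (auto simp: inj_maps_def inj_on_def) (metis linorder_neqE_nat)
    with m show "m \<in> (\<Union>j<k. \<Union>i<j. ?C i j)"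
      by blast
  qed
  moreover have "finite (\<Union>j<k. \<Union>i<j. ?C i j)"
    by (rule finite_subset[OF _ fin]) blast
  ultimately have "card (({..<k} \<rightarrow>\<^sub>E {..<M}) - inj_maps k M) \<le> card (\<Union>j<k. \<Union>i<j. ?C i j)"
    by (rule card_mono[rotated])
  also have "\<dots> \<le> (\<Sum>j<k. \<Sum>i<j. card (?C i j))"
    by (intro order_trans[OF card_UN_le] sum_mono card_UN_le) auto
  also have "\<dots> \<le> (\<Sum>j<k. \<Sum>i<j. M ^ (k - 1))"
    by (intro sum_mono card_maps_collision_le) auto
  also have "\<dots> = (\<Sum>j<k. j) * M ^ (k - 1)"
    by (simp add: sum_distrib_right)
  finally have "real (card (({..<k} \<rightarrow>\<^sub>E {..<M}) - inj_maps k M)) \<le> real ((\<Sum>j<k. j) * M ^ (k - 1))"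
    by (rule of_nat_mono)
  also have "\<dots> = (\<Sum>j<k. real j) * real M ^ (k - 1)"
    by simp
  also have "(\<Sum>j<k. real j) = real k * (real k - 1) / 2"
    by (induction k) (auto simp: field_simps)
  finally show ?thesis .
qed

lemma PiE_Collect_component_eq:
  assumes "j \<in> I" and "a \<in> A"
  shows "{f \<in> I \<rightarrow>\<^sub>E A. f j = a} = PiE I (\<lambda>l. if l = j then {a} else A)"
proof (intro set_eqI iffI)
  fix f assume "f \<in> {f \<in> I \<rightarrow>\<^sub>E A. f j = a}"
  then show "f \<in> PiE I (\<lambda>l. if l = j then {a} else A)"
    by (simp add: PiE_def Pi_def)
next
  fix f assume f: "f \<in> PiE I (\<lambda>l. if l = j then {a} else A)"
  then have "f j = a"
    using PiE_mem[OF f assms(1)] by simp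
  moreover have "f \<in> I \<rightarrow>\<^sub>E A"
    using f assms(2) by (auto simp: PiE_def Pi_def split: if_splits)
  ultimately show "f \<in> {f \<in> I \<rightarrow>\<^sub>E A. f j = a}"
    by simp
qed

lemma sum_PiE_component:
  fixes V :: "nat \<Rightarrow> real"
  assumes j: "j < k"
  shows "(\<Sum>m\<in>{..<k} \<rightarrow>\<^sub>E {..<M}. V (m j)) = real M ^ (k - 1) * (\<Sum>i<M. V i)"
proof -
  let ?P = "{..<k} \<rightarrow>\<^sub>E {..<M}"
  have card: "card {m \<in> ?P. m j = i} = M ^ (k - 1)" if "i < M" for i
    using j that by (simp add: PiE_Collect_component_eq card_PiE if_distrib[of card] prod_gen_delta)
  have "(\<lambda>m. m j) ` ?P \<subseteq> {..<M}"
    using j by (auto simp: PiE_def Pi_def)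
  then have "(\<Sum>m\<in>?P. V (m j)) = (\<Sum>i<M. \<Sum>m\<in>{m \<in> ?P. m j = i}. V (m j))"
    by (intro sum.group[symmetric] finite_PiE) auto
  also have "\<dots> = (\<Sum>i<M. real (M ^ (k - 1)) * V i)"
    by (intro sum.cong refl) (simp add: card)
  finally show ?thesis
    by (simp add: sum_distrib_left)
qed

section \<open>The uniform grid on [0, t]\<close>

text \<open>Cell \<open>m\<close> is \<open>[m t/M, (m+1) t/M)\<close>; the \<open>min\<close> puts \<open>s = t\<close> into the last cell,
  which is therefore closed.\<close>

definition grid_index :: "real \<Rightarrow> nat \<Rightarrow> real \<Rightarrow> nat" where
  "grid_index t M s = min (nat \<lfloor>s / (t / real M)\<rfloor>) (M - 1)"

definition grid_point :: "real \<Rightarrow> nat \<Rightarrow> real \<Rightarrow> real" where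
  "grid_point t M s = real (grid_index t M s) * (t / real M)"

definition grid_cell :: "real \<Rightarrow> nat \<Rightarrow> nat \<Rightarrow> real set" where
  "grid_cell t M m = {s \<in> {0..t}. grid_index t M s = m}"

lemma grid_index_less: "0 < M \<Longrightarrow> grid_index t M s < M"
  by (simp add: grid_index_def)

lemma mono_grid_index:
  assumes "0 < t"
  shows "mono (grid_index t M)"
  unfolding grid_index_def
  by (intro monoI min.mono nat_mono floor_mono divide_right_mono order_refl) (use assms in auto)

lemma mono_grid_point:
  assumes "0 < t"
  shows "mono (grid_point t M)"
  unfolding grid_point_def using mono_grid_index[OF assms, of M] assms
  by (intro monoI mult_right_mono) (auto simp: monoD)

lemma grid_index_eq_iff:
  assumes t: "0 < t" and M: "0 < M" and s: "s \<in> {0..t}" and m: "m < M"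
  shows "grid_index t M s = m \<longleftrightarrow>
           real m * (t / real M) \<le> s \<and> (s < real (Suc m) * (t / real M) \<or> m = M - 1)"
proof -
  define D where "D = t / real M"
  have D: "0 < D"
    using t M by (simp add: D_def)
  have "0 \<le> \<lfloor>s / D\<rfloor>"
    using s D by simp
  then have lower: "m \<le> nat \<lfloor>s / D\<rfloor> \<longleftrightarrow> real m * D \<le> s"
    using D by (simp add: le_nat_iff le_floor_iff pos_le_divide_eq)
  have upper: "nat \<lfloor>s / D\<rfloor> \<le> m \<longleftrightarrow> s < real (Suc m) * D"
    using D by (simp add: nat_le_iff floor_le_iff pos_divide_less_eq add.commute)
  show ?thesis
    unfolding grid_index_def D_def[symmetric] lower[symmetric] upper[symmetric] using m by auto
qed

lemma grid_point_bounds: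
  assumes t: "0 < t" and M: "0 < M" and s: "s \<in> {0..t}"
  shows "grid_point t M s \<le> s" and "s \<le> grid_point t M s + t / real M"
proof -
  let ?m = "grid_index t M s"
  have m: "real ?m * (t / real M) \<le> s \<and> (s < real (Suc ?m) * (t / real M) \<or> ?m = M - 1)"
    by (rule iffD1[OF grid_index_eq_iff[OF t M s grid_index_less[OF M]] refl])
  then show "grid_point t M s \<le> s"
    by (simp add: grid_point_def)
  have "real (Suc ?m) * (t / real M) = grid_point t M s + t / real M"
    by (simp add: grid_point_def algebra_simps)
  moreover have "real (Suc (M - 1)) * (t / real M) = t"
    using M by simp
  ultimately show "s \<le> grid_point t M s + t / real M"
    using m s by auto
qed

lemma grid_point_in_interval:
  assumes "0 < t" "0 < M" "s \<in> {0..t}"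
  shows "grid_point t M s \<in> {0..t}"
  using grid_point_bounds[OF assms] assms by (auto simp: grid_point_def)

lemma tendsto_grid_point:
  assumes t: "0 < t" and s: "s \<in> {0..t}"
  shows "(\<lambda>n. grid_point t (Suc n) s) \<longlonglongrightarrow> s"
proof (rule real_tendsto_sandwich[where f = "\<lambda>n. s - t / real (Suc n)" and h = "\<lambda>n. s"])
  have "s - t / real (Suc n) \<le> grid_point t (Suc n) s" for n
    using grid_point_bounds(2)[OF t zero_less_Suc s, of n] by (simp only: diff_le_eq)
  then show "\<forall>\<^sub>F n in sequentially. s - t / real (Suc n) \<le> grid_point t (Suc n) s"
    by (intro always_eventually allI)
  show "\<forall>\<^sub>F n in sequentially. grid_point t (Suc n) s \<le> s"
    using grid_point_bounds(1)[OF t _ s] by (intro always_eventually allI) simp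
  have "(\<lambda>n. t / real (Suc n)) \<longlonglongrightarrow> 0"
    using LIMSEQ_Suc[OF lim_const_over_n[of t]] by simp
  then show "(\<lambda>n. s - t / real (Suc n)) \<longlonglongrightarrow> s"
    using tendsto_diff[OF tendsto_const[of s]] by fastforce
qed simp

lemma grid_cell_eq:
  assumes t: "0 < t" and M: "0 < M" and m: "m < M"
  shows "grid_cell t M m = (if m = M - 1 then {real m * (t / real M) .. t}
                            else {real m * (t / real M) ..< real (Suc m) * (t / real M)})"
proof -
  have lo: "0 \<le> real m * (t / real M)"
    using t by simp
  have "real (Suc m) * (t / real M) \<le> real M * (t / real M)"
    using t m by (intro mult_right_mono) auto
  then have hi: "real (Suc m) * (t / real M) \<le> t"
    using M by simp
  have mem: "s \<in> grid_cell t M m \<longleftrightarrow> s \<in> {0..t} \<and> real m * (t / real M) \<le> s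
               \<and> (s < real (Suc m) * (t / real M) \<or> m = M - 1)" for s
  proof -
    have "s \<in> grid_cell t M m \<longleftrightarrow> s \<in> {0..t} \<and> grid_index t M s = m"
      by (simp add: grid_cell_def)
    then show ?thesis
      using grid_index_eq_iff[OF t M _ m, of s] by blast
  qed
  show ?thesis
  proof (rule set_eqI)
    fix s
    show "s \<in> grid_cell t M m \<longleftrightarrow> s \<in> (if m = M - 1 then {real m * (t / real M) .. t}
                                  else {real m * (t / real M) ..< real (Suc m) * (t / real M)})"
      unfolding mem using lo hi by (cases "m = M - 1") auto
  qed
qed

lemma emeasure_grid_cell:
  assumes t: "0 < t" and M: "0 < M" and m: "m < M"
  shows "emeasure lborel (grid_cell t M m) = ennreal (t / real M)"
proof -
  define D where "D = t / real M"
  have D: "0 < D" and MD: "real M * D = t"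
    using t M by (simp_all add: D_def)
  have "real m * D \<le> real (Suc m) * D" "real (Suc m) * D - real m * D = D"
    using D by (simp_all add: algebra_simps)
  moreover have "t - real (M - 1) * D = D"
    using M MD by (simp add: of_nat_diff left_diff_distrib)
  moreover have "real (M - 1) * D \<le> t"
    using D \<open>t - real (M - 1) * D = D\<close> by linarith
  ultimately show ?thesis
    by (simp add: grid_cell_eq[OF t M m] D_def[symmetric])
qed

lemma snorm_diff_grid_point_le:
  fixes H :: "real \<Rightarrow> complex^'n^'n"
  assumes t: "0 < t" and M: "0 < M" and H: "H differentiable_on {0..t}"
    and int: "(\<lambda>s. snorm (vector_derivative H (at s within {0..t}))) integrable_on {0..t}"
    and s: "s \<in> {0..t}"
  shows "snorm (H s - H (grid_point t M s))
           \<le> integral {real (grid_index t M s) * (t / real M) .. real (Suc (grid_index t M s)) * (t / real M)}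
                (\<lambda>s. snorm (vector_derivative H (at s within {0..t})))"
proof -
  let ?\<phi> = "\<lambda>s. snorm (vector_derivative H (at s within {0..t}))"
  let ?a = "grid_point t M s" and ?b = "real (Suc (grid_index t M s)) * (t / real M)"
  have "real (Suc (grid_index t M s)) \<le> real M"
    using grid_index_less[OF M, of t s] by simp
  then have "?b \<le> real M * (t / real M)"
    using t by (intro mult_right_mono) auto
  then have "{?a..?b} \<subseteq> {0..t}"
    using M t by (auto simp: grid_point_def)
  moreover have "?a \<le> s" "s \<le> ?b"
    using grid_point_bounds[OF t M s] by (simp_all add: grid_point_def algebra_simps)
  ultimately have sub: "{?a..s} \<subseteq> {0..t}" "{?a..s} \<subseteq> {?a..?b}"
    by auto
  have "snorm (H s - H ?a) \<le> integral {?a..s} ?\<phi>"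
    using \<open>?a \<le> s\<close> sub H integrable_subinterval_real[OF int]
    by (intro snorm_diff_le_integral_derivative) auto
  also have "\<dots> \<le> integral {?a..?b} ?\<phi>"
    using sub \<open>{?a..?b} \<subseteq> {0..t}\<close> integrable_subinterval_real[OF int]
    by (intro integral_subset_le) (auto simp: snorm_nonneg)
  finally show ?thesis
    by (simp add: grid_point_def)
qed

lemma sum_integral_uniform_subintervals:
  fixes f :: "real \<Rightarrow> 'a::banach"
  assumes "0 \<le> D" and "f integrable_on {0..real n * D}"
  shows "(\<Sum>m<n. integral {real m * D .. real (Suc m) * D} f) = integral {0..real n * D} f"
  using assms(2)
proof (induction n)
  case (Suc n)
  have "real n * D \<le> real (Suc n) * D"
    using assms(1) by (simp add: algebra_simps)
  then have "f integrable_on {0..real n * D}"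
    by (intro integrable_subinterval_real[OF Suc.prems]) auto
  then have "(\<Sum>m<Suc n. integral {real m * D .. real (Suc m) * D} f)
               = integral {0..real n * D} f + integral {real n * D .. real (Suc n) * D} f"
    using Suc.IH by simp
  also have "\<dots> = integral {0..real (Suc n) * D} f"
    using \<open>real n * D \<le> real (Suc n) * D\<close> assms(1) Suc.prems
    by (intro Henstock_Kurzweil_Integration.integral_combine) simp_all
  finally show ?case .
qed simp

section \<open>Integration over the cube [0, t]^k\<close>

abbreviation interval_measure :: "real \<Rightarrow> real measure" where
  "interval_measure t \<equiv> restrict_space lborel {0..t}"

abbreviation cube_measure :: "real \<Rightarrow> nat \<Rightarrow> (nat \<Rightarrow> real) measure" where
  "cube_measure t k \<equiv> PiM {..<k} (\<lambda>_. interval_measure t)"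

lemma space_cube_measure: "space (cube_measure t k) = {..<k} \<rightarrow>\<^sub>E {0..t}"
  by (simp add: space_PiM space_restrict_space)

lemma finite_measure_interval_measure: "finite_measure (interval_measure t)"
  using emeasure_bounded_finite[of "{0..t}"]
  by (intro finite_measureI) (simp add: space_restrict_space emeasure_restrict_space)

lemma emeasure_cube_measure_PiE:
  assumes "\<And>i. i < k \<Longrightarrow> A i \<in> sets (interval_measure t)"
  shows "emeasure (cube_measure t k) (PiE {..<k} A) = (\<Prod>i<k. emeasure (interval_measure t) (A i))"
proof -
  interpret finite_measure "interval_measure t"
    by (rule finite_measure_interval_measure)
  interpret product_sigma_finite "\<lambda>_::nat. interval_measure t"
    by unfold_locales
  show ?thesis
    using assms by (intro emeasure_PiM) auto
qed

lemma finite_measure_cube_measure: "finite_measure (cube_measure t k)"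
proof (rule finite_measureI)
  interpret finite_measure "interval_measure t"
    by (rule finite_measure_interval_measure)
  have "emeasure (cube_measure t k) (space (cube_measure t k))
          = (\<Prod>i<k. emeasure (interval_measure t) (space (interval_measure t)))"
    unfolding space_PiM by (rule emeasure_cube_measure_PiE) (rule sets.top)
  then show "emeasure (cube_measure t k) (space (cube_measure t k)) \<noteq> \<infinity>"
    using emeasure_finite[of "space (interval_measure t)"] by (simp add: power_eq_top_ennreal)
qed

lemma sets_grid_cell:
  assumes t: "0 < t" and M: "0 < M"
  shows "grid_cell t M m \<in> sets (interval_measure t)"
proof (cases "m < M")
  case True
  then have "grid_cell t M m \<in> sets borel"
    by (simp add: grid_cell_eq[OF t M])
  moreover have "grid_cell t M m \<subseteq> {0..t}"
    by (auto simp: grid_cell_def)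
  ultimately show ?thesis
    by (simp add: sets_restrict_space_iff)
next
  case False
  then have "grid_cell t M m = {}"
    using grid_index_less[OF M] by (auto simp: grid_cell_def)
  then show ?thesis
    by simp
qed

lemma emeasure_interval_measure_grid_cell:
  assumes "0 < t" "0 < M" "m < M"
  shows "emeasure (interval_measure t) (grid_cell t M m) = ennreal (t / real M)"
proof -
  have "emeasure (interval_measure t) (grid_cell t M m) = emeasure lborel (grid_cell t M m)"
    by (rule emeasure_restrict_space) (auto simp: grid_cell_def)
  then show ?thesis
    using emeasure_grid_cell[OF assms] by simp
qed

definition grid_indices :: "real \<Rightarrow> nat \<Rightarrow> nat \<Rightarrow> (nat \<Rightarrow> real) \<Rightarrow> nat \<Rightarrow> nat" where
  "grid_indices t M k x = (\<lambda>j\<in>{..<k}. grid_index t M (x j))"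

lemma grid_indices_in_PiE: "0 < M \<Longrightarrow> grid_indices t M k x \<in> {..<k} \<rightarrow>\<^sub>E {..<M}"
  by (simp add: grid_indices_def grid_index_less)

lemma emeasure_grid_box:
  assumes t: "0 < t" and M: "0 < M" and m: "m \<in> {..<k} \<rightarrow>\<^sub>E {..<M}"
  shows "emeasure (cube_measure t k) (PiE {..<k} (\<lambda>j. grid_cell t M (m j))) = ennreal ((t / real M) ^ k)"
proof -
  have "emeasure (cube_measure t k) (PiE {..<k} (\<lambda>j. grid_cell t M (m j))) = (\<Prod>i<k. ennreal (t / real M))"
    using m by (simp add: emeasure_cube_measure_PiE sets_grid_cell[OF t M]
        emeasure_interval_measure_grid_cell[OF t M] PiE_iff)
  then show ?thesis
    using t by (simp add: ennreal_power)
qed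

lemma has_bochner_integral_grid_step:
  fixes F :: "(nat \<Rightarrow> nat) \<Rightarrow> 'a::{banach, second_countable_topology}"
  assumes t: "0 < t" and M: "0 < M"
  shows "has_bochner_integral (cube_measure t k) (\<lambda>x. F (grid_indices t M k x))
           ((t / real M) ^ k *\<^sub>R (\<Sum>m\<in>{..<k} \<rightarrow>\<^sub>E {..<M}. F m))"
proof -
  let ?P = "{..<k} \<rightarrow>\<^sub>E {..<M}"
  let ?B = "\<lambda>m. PiE {..<k} (\<lambda>j. grid_cell t M (m j))"
  have sets: "?B m \<in> sets (cube_measure t k)" for m
    by (intro sets_PiM_I_finite sets_grid_cell[OF t M]) auto
  note emeasure = emeasure_grid_box[OF t M]
  have indicator_sum: "(\<Sum>m\<in>?P. indicator (?B m) x *\<^sub>R F m) = F (grid_indices t M k x)"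
    if "x \<in> space (cube_measure t k)" for x
  proof -
    have "x \<in> ?B m \<longleftrightarrow> m = grid_indices t M k x" if "m \<in> ?P" for m
      using \<open>x \<in> space _\<close> that
      by (auto simp: space_cube_measure grid_indices_def grid_cell_def PiE_iff extensional_def)
    then have "(\<Sum>m\<in>?P. indicator (?B m) x *\<^sub>R F m) = (\<Sum>m\<in>?P. if m = grid_indices t M k x then F m else 0)"
      by (intro sum.cong refl) (simp add: indicator_def)
    then show ?thesis
      using grid_indices_in_PiE[OF M] by (simp add: finite_PiE)
  qed
  have "has_bochner_integral (cube_measure t k) (\<lambda>x. \<Sum>m\<in>?P. indicator (?B m) x *\<^sub>R F m)
          (\<Sum>m\<in>?P. measure (cube_measure t k) (?B m) *\<^sub>R F m)"
    using emeasure by (intro has_bochner_integral_sum has_bochner_integral_scaleR_left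
        has_bochner_integral_real_indicator sets) simp_all
  moreover have "(\<Sum>m\<in>?P. measure (cube_measure t k) (?B m) *\<^sub>R F m) = (t / real M) ^ k *\<^sub>R (\<Sum>m\<in>?P. F m)"
    using emeasure t by (simp add: measure_def scaleR_sum_right)
  ultimately show ?thesis
    by (simp add: has_bochner_integral_cong[OF refl indicator_sum refl, symmetric])
qed

lemma time_ordered_grid_point:
  "time_ordered H k (grid_point t M \<circ> x)
     = time_ordered H k (\<lambda>j. real (grid_indices t M k x j) * (t / real M))"
  by (rule time_ordered_cong) (simp add: grid_point_def grid_indices_def)

lemma has_bochner_integral_time_ordered_grid:
  assumes "0 < t" "0 < M"
  shows "has_bochner_integral (cube_measure t k) (\<lambda>x. time_ordered H k (grid_point t M \<circ> x))
           ((t / real M) ^ k *\<^sub>R (\<Sum>m\<in>{..<k} \<rightarrow>\<^sub>E {..<M}. time_ordered H k (\<lambda>j. real (m j) * (t / real M))))"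
  unfolding time_ordered_grid_point by (rule has_bochner_integral_grid_step[OF assms])

text \<open>The time-ordered product is measurable as the pointwise limit of its grid approximations,
  which sidesteps the measurability of sorting.\<close>

lemma borel_measurable_time_ordered:
  assumes t: "0 < t" and H: "continuous_on {0..t} H"
  shows "time_ordered H k \<in> borel_measurable (cube_measure t k)"
proof (rule borel_measurable_LIMSEQ_metric)
  show "(\<lambda>x. time_ordered H k (grid_point t (Suc n) \<circ> x)) \<in> borel_measurable (cube_measure t k)" for n
    using has_bochner_integral_time_ordered_grid[OF t zero_less_Suc]
    by (rule borel_measurable_has_bochner_integral)
  fix x assume "x \<in> space (cube_measure t k)"
  then have x: "x j \<in> {0..t}" if "j < k" for j
    using that by (simp add: space_cube_measure PiE_iff)
  have "((\<lambda>n. (H \<circ> grid_point t (Suc n)) (x j)) \<longlongrightarrow> H (x j)) sequentially" if "j < k" for j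
    unfolding comp_def
    by (rule continuous_on_tendsto_compose[OF H tendsto_grid_point[OF t x[OF that]] x[OF that]])
       (intro always_eventually allI grid_point_in_interval[OF t zero_less_Suc x[OF that]])
  then have "(\<lambda>n. time_ordered (H \<circ> grid_point t (Suc n)) k x) \<longlonglongrightarrow> time_ordered H k x"
    by (rule tendsto_time_ordered)
  moreover have "time_ordered H k (grid_point t (Suc n) \<circ> x)
                   = time_ordered (H \<circ> grid_point t (Suc n)) k x" for n
    by (simp only: time_ordered_comp_mono[OF mono_grid_point[OF t]]) (simp only: time_ordered_def)
  ultimately show "(\<lambda>n. time_ordered H k (grid_point t (Suc n) \<circ> x)) \<longlonglongrightarrow> time_ordered H k x"
    by simp
qed

lemma integrable_time_ordered:
  fixes H :: "real \<Rightarrow> complex^'n^'n"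
  assumes t: "0 < t" and H: "continuous_on {0..t} H" and h: "\<And>s. s \<in> {0..t} \<Longrightarrow> snorm (H s) \<le> h"
  shows "integrable (cube_measure t k) (time_ordered H k)"
proof -
  interpret finite_measure "cube_measure t k"
    by (rule finite_measure_cube_measure)
  have "0 \<le> h"
    using h[of 0] snorm_nonneg[of "H 0"] t by simp
  have "norm (time_ordered H k x) \<le> real CARD('n)^2 * h ^ k"
    if "x \<in> space (cube_measure t k)" for x :: "nat \<Rightarrow> real"
  proof -
    have "x j \<in> {0..t}" if "j < k" for j
      using \<open>x \<in> space _\<close> that by (simp add: space_cube_measure PiE_iff)
    then have "snorm (time_ordered H k x) \<le> h ^ k"
      using \<open>0 \<le> h\<close> by (intro snorm_time_ordered_le h)
    then have "real CARD('n)^2 * snorm (time_ordered H k x) \<le> real CARD('n)^2 * h ^ k"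
      by (rule mult_left_mono) simp
    with norm_le_snorm[of "time_ordered H k x"] show ?thesis
      by (rule order_trans)
  qed
  then show ?thesis
    by (intro integrable_const_bound[where B = "real CARD('n)^2 * h ^ k"] AE_I2
        borel_measurable_time_ordered[OF t H])
qed

lemma Dk_0: "Dk H t 0 = mat 1"
proof -
  have "space (PiM {} (\<lambda>_::nat. interval_measure t)) = {\<lambda>_. undefined}"
    by (simp add: space_PiM)
  moreover have "measure (PiM {} (\<lambda>_::nat. interval_measure t)) {\<lambda>_. undefined} = 1"
    by (simp add: measure_def)
  moreover have "time_ordered H 0 = (\<lambda>_. mat 1)"
    by (rule ext) (simp add: time_ordered_def)
  ultimately show ?thesis
    by (simp add: Dk_def)
qed

section \<open>The error of a single term\<close>

lemma snorm_sum_non_inj_maps_le: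
  fixes H :: "real \<Rightarrow> complex^'n^'n"
  assumes t: "0 < t" and M: "0 < M" and h: "\<And>s. s \<in> {0..t} \<Longrightarrow> snorm (H s) \<le> h" and "0 \<le> h"
  shows "snorm (\<Sum>m\<in>({..<k} \<rightarrow>\<^sub>E {..<M}) - inj_maps k M. time_ordered H k (\<lambda>j. real (m j) * (t / real M)))
           \<le> real k * (real k - 1) / 2 * real M ^ (k - 1) * h ^ k"
proof -
  let ?N = "({..<k} \<rightarrow>\<^sub>E {..<M}) - inj_maps k M"
  have "snorm (time_ordered H k (\<lambda>j. real (m j) * (t / real M))) \<le> h ^ k" if "m \<in> ?N" for m
  proof (intro snorm_time_ordered_le h \<open>0 \<le> h\<close>)
    fix j assume "j < k"
    then have "m j < M"
      using that by (auto simp: PiE_def Pi_def)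
    then have "real (m j) \<le> real M"
      by simp
    then have "real (m j) * (t / real M) \<le> real M * (t / real M)"
      using t by (intro mult_right_mono) auto
    then show "real (m j) * (t / real M) \<in> {0..t}"
      using t M by simp
  qed
  then have "snorm (\<Sum>m\<in>?N. time_ordered H k (\<lambda>j. real (m j) * (t / real M))) \<le> real (card ?N) * h ^ k"
    by (intro order_trans[OF snorm_sum_le sum_bounded_above])
  also have "\<dots> \<le> real k * (real k - 1) / 2 * real M ^ (k - 1) * h ^ k"
    by (intro mult_right_mono card_non_inj_maps_le) (simp add: \<open>0 \<le> h\<close>)
  finally show ?thesis .
qed

lemma mult_width_power_eq:
  assumes "0 < M"
  shows "real k * (t / real M) ^ k * real M ^ (k - 1) = real k * (t / real M) * t ^ (k - 1)"
proof (cases k)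
  case (Suc j)
  have "(t / real M) ^ j * real M ^ j = t ^ j"
    using assms by (simp add: power_divide)
  then show ?thesis
    using Suc by (simp add: mult_ac)
qed simp

lemma snorm_time_ordered_diff_grid_point_le:
  fixes H :: "real \<Rightarrow> complex^'n^'n"
  assumes t: "0 < t" and M: "0 < M"
    and h: "\<And>s. s \<in> {0..t} \<Longrightarrow> snorm (H s) \<le> h" and "0 \<le> h"
    and V: "\<And>s. s \<in> {0..t} \<Longrightarrow> snorm (H s - H (grid_point t M s)) \<le> V (grid_index t M s)"
    and x: "x \<in> space (cube_measure t k)"
  shows "snorm (time_ordered H k x - time_ordered H k (grid_point t M \<circ> x))
           \<le> h ^ (k - 1) * (\<Sum>j<k. V (grid_indices t M k x j))"
proof -
  have x: "x j \<in> {0..t}" if "j < k" for j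
    using x that by (simp add: space_cube_measure PiE_iff)
  have "time_ordered H k (grid_point t M \<circ> x) = time_ordered (H \<circ> grid_point t M) k x"
    by (simp only: time_ordered_comp_mono[OF mono_grid_point[OF t]]) (simp only: time_ordered_def)
  then have "snorm (time_ordered H k x - time_ordered H k (grid_point t M \<circ> x))
               \<le> h ^ (k - 1) * (\<Sum>j<k. snorm (H (x j) - (H \<circ> grid_point t M) (x j)))"
    using x grid_point_in_interval[OF t M]
    by (simp only:) (intro snorm_time_ordered_diff_le; auto intro: h \<open>0 \<le> h\<close>)
  also have "\<dots> \<le> h ^ (k - 1) * (\<Sum>j<k. V (grid_indices t M k x j))"
    using x V \<open>0 \<le> h\<close> by (auto intro!: mult_left_mono sum_mono simp: grid_indices_def)
  finally show ?thesis .
qed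

lemma has_bochner_integral_grid_variation:
  fixes V :: "nat \<Rightarrow> real"
  assumes t: "0 < t" and M: "0 < M"
  shows "has_bochner_integral (cube_measure t k) (\<lambda>x. h ^ (k - 1) * (\<Sum>j<k. V (grid_indices t M k x j)))
           (real k * (t / real M) * (h * t) ^ (k - 1) * (\<Sum>m<M. V m))"
proof -
  let ?P = "{..<k} \<rightarrow>\<^sub>E {..<M}"
  have "(\<Sum>m\<in>?P. h ^ (k - 1) * (\<Sum>j<k. V (m j))) = h ^ (k - 1) * (\<Sum>j<k. \<Sum>m\<in>?P. V (m j))"
    by (simp add: sum_distrib_left sum.swap[of _ ?P])
  also have "\<dots> = h ^ (k - 1) * (real k * real M ^ (k - 1) * (\<Sum>i<M. V i))"
    by (simp add: sum_PiE_component)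
  finally have "(t / real M) ^ k * (\<Sum>m\<in>?P. h ^ (k - 1) * (\<Sum>j<k. V (m j)))
                  = (real k * (t / real M) ^ k * real M ^ (k - 1)) * (h ^ (k - 1) * (\<Sum>m<M. V m))"
    by (simp only: mult_ac)
  also have "\<dots> = real k * (t / real M) * (h * t) ^ (k - 1) * (\<Sum>m<M. V m)"
    unfolding mult_width_power_eq[OF M] by (simp add: power_mult_distrib mult_ac)
  finally show ?thesis
    using has_bochner_integral_grid_step[OF t M, of k "\<lambda>m. h ^ (k - 1) * (\<Sum>j<k. V (m j))"] by simp
qed

lemma snorm_integral_time_ordered_grid_diff_le:
  fixes H :: "real \<Rightarrow> complex^'n^'n"
  assumes t: "0 < t" and M: "0 < M" and H: "H differentiable_on {0..t}"
    and int: "(\<lambda>s. snorm (vector_derivative H (at s within {0..t}))) integrable_on {0..t}"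
    and h: "\<And>s. s \<in> {0..t} \<Longrightarrow> snorm (H s) \<le> h" and "0 \<le> h"
  shows "snorm (integral\<^sup>L (cube_measure t k) (\<lambda>x. time_ordered H k x - time_ordered H k (grid_point t M \<circ> x)))
           \<le> real k * (t / real M) * (h * t) ^ (k - 1)
               * integral {0..t} (\<lambda>s. snorm (vector_derivative H (at s within {0..t})))"
proof -
  let ?\<phi> = "\<lambda>s. snorm (vector_derivative H (at s within {0..t}))"
  define V where "V m = integral {real m * (t / real M) .. real (Suc m) * (t / real M)} ?\<phi>" for m
  have V: "\<And>s. s \<in> {0..t} \<Longrightarrow> snorm (H s - H (grid_point t M s)) \<le> V (grid_index t M s)"
    unfolding V_def by (rule snorm_diff_grid_point_le[OF t M H int])
  have "(\<Sum>m<M. V m) = integral {0..real M * (t / real M)} ?\<phi>"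
    unfolding V_def using t M int by (intro sum_integral_uniform_subintervals) auto
  then have sum_V: "(\<Sum>m<M. V m) = integral {0..t} ?\<phi>"
    using M by simp
  note variation = has_bochner_integral_grid_variation[OF t M, of k h V]
  have "integrable (cube_measure t k) (\<lambda>x. time_ordered H k x - time_ordered H k (grid_point t M \<circ> x))"
    using integrable_time_ordered[OF t differentiable_imp_continuous_on[OF H] h]
      has_bochner_integral_time_ordered_grid[OF t M]
    by (intro Bochner_Integration.integrable_diff) (auto dest: integrable.intros)
  from snorm_integral_le[OF this integrable.intros[OF variation]
      snorm_time_ordered_diff_grid_point_le[OF t M h \<open>0 \<le> h\<close> V]]
  show ?thesis
    unfolding has_bochner_integral_integral_eq[OF variation] sum_V .
qed

lemma fact_scaleR_Dk_diff_Bk_eq: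
  fixes H :: "real \<Rightarrow> complex^'n^'n"
  assumes t: "0 < t" and M: "0 < M" and H: "continuous_on {0..t} H"
    and h: "\<And>s. s \<in> {0..t} \<Longrightarrow> snorm (H s) \<le> h"
  shows "fact k *\<^sub>R (Dk H t k - (t / real M) ^ k *\<^sub>R Bk H t M k)
           = integral\<^sup>L (cube_measure t k) (\<lambda>x. time_ordered H k x - time_ordered H k (grid_point t M \<circ> x))
             + (t / real M) ^ k *\<^sub>R
                 (\<Sum>m\<in>({..<k} \<rightarrow>\<^sub>E {..<M}) - inj_maps k M. time_ordered H k (\<lambda>j. real (m j) * (t / real M)))"
proof -
  let ?P = "{..<k} \<rightarrow>\<^sub>E {..<M}"
  let ?T = "\<lambda>m. time_ordered H k (\<lambda>j. real (m j) * (t / real M))"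
  have step: "has_bochner_integral (cube_measure t k) (\<lambda>x. time_ordered H k (grid_point t M \<circ> x))
                ((t / real M) ^ k *\<^sub>R (\<Sum>m\<in>?P. ?T m))"
    by (rule has_bochner_integral_time_ordered_grid[OF t M])
  have "inj_maps k M \<subseteq> ?P"
    by (auto simp: inj_maps_def)
  then have "(\<Sum>m\<in>?P. ?T m) = (\<Sum>m\<in>?P - inj_maps k M. ?T m) + fact k *\<^sub>R Bk H t M k"
    using sum.subset_diff[of "inj_maps k M" ?P ?T] t
      sum_inj_maps_time_ordered[where t = t and k = k and H = H and M = M]
    by (simp add: finite_PiE)
  moreover have "fact k *\<^sub>R Dk H t k = integral\<^sup>L (cube_measure t k) (time_ordered H k)"
    by (simp add: Dk_def)
  ultimately show ?thesis
    using integrable_time_ordered[OF t H h] integrable.intros[OF step] step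
    by (simp add: has_bochner_integral_integral_eq algebra_simps)
qed

lemma Dk_error_bound_eq:
  assumes "0 < M"
  shows "(1 / fact k) * (real k * (t / real M) * (h * t) ^ (k - 1) * I
            + (t / real M) ^ k * (real k * (real k - 1) / 2 * real M ^ (k - 1) * h ^ k))
         = t / real M * (real k * (h * t) ^ (k - 1) / fact k) * (I + (real k - 1) * h / 2)"
proof (cases k)
  case (Suc j)
  have "(t / real M) ^ k * (real k * (real k - 1) / 2 * real M ^ (k - 1) * h ^ k)
          = (real k * (t / real M) ^ k * real M ^ (k - 1)) * ((real k - 1) / 2 * h ^ k)"
    by (simp add: field_simps)
  also have "\<dots> = t / real M * (real k * (h * t) ^ (k - 1)) * ((real k - 1) * h / 2)"
    unfolding mult_width_power_eq[OF assms] using Suc by (simp add: power_mult_distrib mult_ac)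
  finally have second: "(t / real M) ^ k * (real k * (real k - 1) / 2 * real M ^ (k - 1) * h ^ k)
                          = t / real M * (real k * (h * t) ^ (k - 1)) * ((real k - 1) * h / 2)" .
  have "(1 / f) * (a * D * I + D * a * c) = D * (a / f) * (I + c)" for f a D c :: real
    by (simp add: field_simps)
  from this[of "fact k" "real k * (h * t) ^ (k - 1)" "t / real M" "(real k - 1) * h / 2"]
  show ?thesis
    unfolding second by (simp only: mult_ac)
qed simp

lemma snorm_Dk_diff_Bk_le:
  fixes H :: "real \<Rightarrow> complex^'n^'n"
  assumes t: "0 < t" and M: "0 < M" and H: "H differentiable_on {0..t}"
    and int: "(\<lambda>s. snorm (vector_derivative H (at s within {0..t}))) integrable_on {0..t}"
    and h: "\<And>s. s \<in> {0..t} \<Longrightarrow> snorm (H s) \<le> h"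
  shows "snorm (Dk H t k - (t / real M) ^ k *\<^sub>R Bk H t M k)
           \<le> t / real M * (real k * (h * t) ^ (k - 1) / fact k)
               * (integral {0..t} (\<lambda>s. snorm (vector_derivative H (at s within {0..t}))) + (real k - 1) * h / 2)"
proof -
  let ?D = "t / real M"
  let ?Y = "integral\<^sup>L (cube_measure t k) (\<lambda>x. time_ordered H k x - time_ordered H k (grid_point t M \<circ> x))"
  let ?R = "\<Sum>m\<in>({..<k} \<rightarrow>\<^sub>E {..<M}) - inj_maps k M. time_ordered H k (\<lambda>j. real (m j) * ?D)"
  have "0 \<le> h"
    using h[of 0] snorm_nonneg[of "H 0"] t by simp
  have "Dk H t k - ?D ^ k *\<^sub>R Bk H t M k
          = (1 / fact k) *\<^sub>R (fact k *\<^sub>R (Dk H t k - ?D ^ k *\<^sub>R Bk H t M k))"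
    by simp
  also have "\<dots> = (1 / fact k) *\<^sub>R (?Y + ?D ^ k *\<^sub>R ?R)"
    by (simp only: fact_scaleR_Dk_diff_Bk_eq[OF t M differentiable_imp_continuous_on[OF H] h])
  finally have "snorm (Dk H t k - ?D ^ k *\<^sub>R Bk H t M k) = (1 / fact k) * snorm (?Y + ?D ^ k *\<^sub>R ?R)"
    by (simp add: snorm_scaleR)
  also have "\<dots> \<le> (1 / fact k) * (snorm ?Y + ?D ^ k * snorm ?R)"
    using snorm_add_le[of ?Y "?D ^ k *\<^sub>R ?R"] t by (intro mult_left_mono) (simp_all add: snorm_scaleR)
  also have "\<dots> \<le> (1 / fact k) * (real k * ?D * (h * t) ^ (k - 1)
                                      * integral {0..t} (\<lambda>s. snorm (vector_derivative H (at s within {0..t})))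
                                    + ?D ^ k * (real k * (real k - 1) / 2 * real M ^ (k - 1) * h ^ k))"
    using t \<open>0 \<le> h\<close>
    by (intro mult_left_mono add_mono snorm_integral_time_ordered_grid_diff_le[OF t M H int h]
        snorm_sum_non_inj_maps_le[OF t M h]) auto
  finally show ?thesis
    unfolding Dk_error_bound_eq[OF M] .
qed

section \<open>Summation over the terms\<close>

lemma sums_exp_series_derivative:
  fixes x :: real
  shows "(\<lambda>k. real k * x ^ (k - 1) / fact k) sums exp x"
proof -
  have "(\<lambda>i. real (i + 1) * x ^ (i + 1 - 1) / fact (i + 1)) = (\<lambda>i. x ^ i / fact i)"
    by (simp add: fun_eq_iff field_simps del: of_nat_Suc)
  then show ?thesis
    using exp_converges[of x] sums_zero_iff_shift[of 1 "\<lambda>k. real k * x ^ (k - 1) / fact k"]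
    by (simp add: divide_inverse_commute)
qed

lemma sums_exp_series_second_derivative:
  fixes x :: real
  shows "(\<lambda>k. real k * (real k - 1) * x ^ (k - 1) / fact k) sums (x * exp x)"
proof -
  have "real (i + 2) * (real (i + 2) - 1) * x ^ (i + 2 - 1) / fact (i + 2) = x * (x ^ i / fact i)" for i
  proof -
    have "fact (i + 2) = real (i + 2) * real (i + 1) * (fact i :: real)"
      by (simp add: numeral_2_eq_2 algebra_simps)
    moreover have "real (i + 2) - 1 = real (i + 1)" and "x ^ (i + 2 - 1) = x * x ^ i"
      by (simp_all add: numeral_2_eq_2)
    moreover have "real (i + 2) * real (i + 1) \<noteq> 0"
      by simp
    ultimately show ?thesis
      by (simp only: nonzero_mult_divide_mult_cancel_left) simp
  qed
  moreover have "(\<lambda>i. x * (x ^ i / fact i)) sums (x * exp x)"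
    using exp_converges[of x] by (intro sums_mult) (simp add: divide_inverse_commute)
  ultimately show ?thesis
    using sums_zero_iff_shift[of 2 "\<lambda>k. real k * (real k - 1) * x ^ (k - 1) / fact k"]
    by (simp add: less_2_cases_iff)
qed

lemma sum_le_sums:
  fixes f :: "nat \<Rightarrow> real"
  assumes "f sums s" and "\<And>k. 0 \<le> f k" and "finite A"
  shows "sum f A \<le> s"
  using sum_le_suminf[of f A] assms sums_summable sums_unique by fastforce

lemma sum_Dk_error_bound_le:
  fixes x h I D :: real
  assumes "0 \<le> x" "0 \<le> h" "0 \<le> I" "0 \<le> D"
  shows "(\<Sum>k=0..K. D * (real k * x ^ (k - 1) / fact k) * (I + (real k - 1) * h / 2))
           \<le> D * exp x * (I + x * h / 2)"
proof -
  have split_term: "D * (real k * x ^ (k - 1) / fact k) * (I + (real k - 1) * h / 2)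
                      = D * I * (real k * x ^ (k - 1) / fact k)
                        + D * h / 2 * (real k * (real k - 1) * x ^ (k - 1) / fact k)" for k
    by (simp add: field_simps)
  have "0 \<le> real k * (real k - 1)" for k
    by (cases k) auto
  then have nonneg: "0 \<le> real k * (real k - 1) * x ^ (k - 1) / fact k" for k
    using assms(1) by simp
  have "(\<Sum>k=0..K. D * (real k * x ^ (k - 1) / fact k) * (I + (real k - 1) * h / 2))
          = D * I * (\<Sum>k=0..K. real k * x ^ (k - 1) / fact k)
            + D * h / 2 * (\<Sum>k=0..K. real k * (real k - 1) * x ^ (k - 1) / fact k)"
    by (simp only: split_term sum.distrib sum_distrib_left)
  also have "\<dots> \<le> D * I * exp x + D * h / 2 * (x * exp x)"
    using assms nonneg
    by (intro add_mono mult_left_mono sum_le_sums[OF sums_exp_series_derivative]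
        sum_le_sums[OF sums_exp_series_second_derivative]) auto
  finally show ?thesis
    by (simp add: algebra_simps)
qed

lemma snorm_Dyson_sums_diff_le:
  "snorm ((\<Sum>k=0..K. cscale ((-\<i>) ^ k) (D k)) - (\<Sum>k=0..K. cscale ((-\<i> * complex_of_real r) ^ k) (B k)))
     \<le> (\<Sum>k=0..K. snorm (D k - r ^ k *\<^sub>R B k))"
proof -
  have "(\<Sum>k=0..K. cscale ((-\<i>) ^ k) (D k)) - (\<Sum>k=0..K. cscale ((-\<i> * complex_of_real r) ^ k) (B k))
          = (\<Sum>k=0..K. cscale ((-\<i>) ^ k) (D k - r ^ k *\<^sub>R B k))"
  proof -
    have "cscale ((-\<i> * complex_of_real r) ^ k) (B k) = cscale ((-\<i>) ^ k) (r ^ k *\<^sub>R B k)" for k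
      by (simp only: power_mult_distrib of_real_power[symmetric] cscale_mult_of_real)
    then show ?thesis
      by (simp only: sum_subtractf[symmetric] cscale_diff)
  qed
  also have "snorm \<dots> \<le> (\<Sum>k=0..K. snorm (cscale ((-\<i>) ^ k) (D k - r ^ k *\<^sub>R B k)))"
    by (rule snorm_sum_le)
  also have "\<dots> \<le> (\<Sum>k=0..K. snorm (D k - r ^ k *\<^sub>R B k))"
    by (intro sum_mono order_trans[OF snorm_cscale_le]) (simp add: norm_power)
  finally show ?thesis .
qed

lemma error_bound_le_of_steps_ge:
  fixes t \<epsilon> E I h :: real
  assumes t: "0 < t" and \<epsilon>: "0 < \<epsilon>" and M: "0 < M" and "0 \<le> E" "0 \<le> I"
    and steps: "real M \<ge> t^2 / \<epsilon> * 4 * E * ((1 / t) * I + h^2)"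
  shows "t / real M * E * (I + h * t * h / 2) \<le> \<epsilon>"
proof -
  have "\<epsilon> * (t^2 / \<epsilon> * 4 * E * ((1 / t) * I + h^2)) = 4 * E * (t * I + t^2 * h^2)"
    using t \<epsilon> by (simp add: field_simps power2_eq_square)
  then have "4 * E * (t * I + t^2 * h^2) \<le> \<epsilon> * real M"
    using steps \<epsilon> by (metis mult_left_mono less_imp_le)
  moreover have "t * I + t^2 * h^2 / 2 \<le> 4 * (t * I + t^2 * h^2)"
    using t \<open>0 \<le> I\<close> zero_le_power2[of "t * h"] by (simp add: power_mult_distrib)
  then have "E * (t * I + t^2 * h^2 / 2) \<le> E * (4 * (t * I + t^2 * h^2))"
    using \<open>0 \<le> E\<close> by (rule mult_left_mono)
  ultimately have bound: "E * (t * I + t^2 * h^2 / 2) \<le> \<epsilon> * real M"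
    by (simp add: mult_ac)
  have "t / real M * E * (I + h * t * h / 2) = E * (t * I + t^2 * h^2 / 2) / real M"
    by (simp add: field_simps power2_eq_square)
  also have "\<dots> \<le> \<epsilon>"
    using bound M by (simp add: pos_divide_le_eq)
  finally show ?thesis .
qed

theorem lemma5:
  fixes H :: "real \<Rightarrow> complex^'n^'n" and t \<epsilon>2 :: real and K M :: nat
  assumes "t > 0"
    and "H differentiable_on {0..t}"
    and "(\<lambda>s. snorm (vector_derivative H (at s within {0..t}))) integrable_on {0..t}"
    and "\<epsilon>2 > 0"
    and "real M \<ge> t^2 / \<epsilon>2 * 4 * exp ((SUP s\<in>{0..t}. snorm (H s)) * t) *
           ((1 / t) * integral {0..t} (\<lambda>s. snorm (vector_derivative H (at s within {0..t})))
            + (SUP s\<in>{0..t}. snorm (H s))^2)"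
    and "M \<ge> K^2"
  shows "snorm ((\<Sum>k=0..K. cscale ((-\<i>)^k) (Dk H t k))
              - (\<Sum>k=0..K. cscale ((-\<i> * complex_of_real (t / real M))^k) (Bk H t M k))) \<le> \<epsilon>2"
proof -
  define h where "h = (SUP s\<in>{0..t}. snorm (H s))"
  define I where "I = integral {0..t} (\<lambda>s. snorm (vector_derivative H (at s within {0..t})))"
  have h: "\<And>s. s \<in> {0..t} \<Longrightarrow> snorm (H s) \<le> h"
    unfolding h_def using differentiable_imp_continuous_on[OF assms(2)]
    by (intro cSUP_upper bdd_above_snorm_image compact_Icc)
  have "0 \<le> h"
    using h[of 0] snorm_nonneg[of "H 0"] assms(1) by simp
  have "0 \<le> I"
    unfolding I_def by (rule integral_nonneg[OF assms(3)]) (simp add: snorm_nonneg)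
  show ?thesis
  proof (cases "M = 0")
    case True
    \<comment> \<open>Then \<open>K = 0\<close>; this is the only use of the hypothesis \<open>M \<ge> K^2\<close>.\<close>
    then show ?thesis
      using assms(4,6) by (simp add: Dk_0 Bk_0 cscale_def)
  next
    case False
    then have M: "0 < M"
      by simp
    have "(\<Sum>k=0..K. snorm (Dk H t k - (t / real M) ^ k *\<^sub>R Bk H t M k))
            \<le> (\<Sum>k=0..K. t / real M * (real k * (h * t) ^ (k - 1) / fact k) * (I + (real k - 1) * h / 2))"
      unfolding I_def by (intro sum_mono snorm_Dk_diff_Bk_le[OF assms(1) M assms(2,3) h])
    also have "\<dots> \<le> t / real M * exp (h * t) * (I + h * t * h / 2)"
      using \<open>0 \<le> h\<close> \<open>0 \<le> I\<close> assms(1) by (intro sum_Dk_error_bound_le) auto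
    also have "\<dots> \<le> \<epsilon>2"
      using assms(1,4,5) M \<open>0 \<le> I\<close> by (intro error_bound_le_of_steps_ge) (auto simp: h_def I_def)
    finally show ?thesis
      by (rule order_trans[OF snorm_Dyson_sums_diff_le])
  qed
qed

end
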